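(* Let $k,n\ge 1$ and $\theta>0$, and let $P_{n,k}$ be the number of nonempty boxes in the random allocation $\mathbf K_{n,k}$ described in the context. (a) If $k\ge n$, then for $|u|\le 1$ $$\mathbf E\left(u^{P_{n,k}}\right)=\sum_{p=0}^{n-1}\binom{n}{p}u^{n-p}(1-u)^p\,\frac{\sigma_k((n-p)\theta)}{\sigma_k(n\theta)},$$ and $$\mathbf P(P_{n,k}=p)=\binom{n}{p}\sum_{q=1}^{p}(-1)^{p-q}\binom{p}{q}\frac{\sigma_k(q\theta)}{\sigma_k(n\theta)},\qquad p\in\{1,\dots,n\}.$$ Moreover $$\mathbf E(P_{n,k})=n\left(1-\frac{\sigma_k((n-1)\theta)}{\sigma_k(n\theta)}\right),$$ $$\mathrm{Var}(P_{n,k})=n\left(\frac{\sigma_k((n-1)\theta)}{\sigma_k(n\theta)}+(n-1)\frac{\sigma_k((n-2)\theta)}{\sigma_k(n\theta)}-n\left(\frac{\sigma_k((n-1)\theta)}{\sigma_k(n\theta)}\right)^2\right).$$ (b) If $k<n$, the same formula for $\mathbf E(u^{P_{n,k}})$ holds, and $$\mathbf P(P_{n,k}=p)=\binom{n}{p}\sum_{q=1}^{p}(-1)^{p-q}\binom{p}{q}\frac{\sigma_k(q\theta)}{\sigma_k(n\theta)},\qquad p\in\{1,\dots,k\},$$ the support of $P_{n,k}$ being $\{1,\dots,k\}$.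
   Context: Let $(\phi_m)_{m\ge1}$ be nonnegative reals with $\phi_1>0$ such that $\phi(x)=\sum_{m\ge1}\phi_m x^m/m!$ has radius of convergence $x_0\in(0,\infty]$. For $\theta>0$ define the polynomials $\sigma_k(\theta)$ by $e^{\theta\phi(x)}=1+\sum_{k\ge1}\sigma_k(\theta)x^k/k!$, with $\sigma_0\equiv 1$. Equivalently, $\sigma_k(\theta)=\sum_{l=1}^k B_{k,l}(\phi_\bullet)\theta^l$, where $B_{k,l}(\phi_\bullet)=\frac{k!}{l!}[x^k]\phi(x)^l$. Fix $\theta>0$ and integers $n,k\ge1$. Let $\mathbf K_{n,k}=(K_{n,k}(1),\dots,K_{n,k}(n))$ be a random vector in $\mathbb N_0^n$ with $$\mathbf P(\mathbf K_{n,k}=(k_1,\dots,k_n))=\frac{k!}{\sigma_k(n\theta)}\prod_{m=1}^n\frac{\sigma_{k_m}(\theta)}{k_m!}\quad\text{whenever } k_1+\dots+k_n=k.$$ This is the law of $(\xi_1,\dots,\xi_n)$ conditioned on $\xi_1+\dots+\xi_n=k$, where the $\xi_i$ are iid with probability generating function $\mathbf E u^{\xi}=\exp(\theta(\phi(xu)-\phi(x)))$ for some $x\in(0,x_0)$; this law does not depend on $x$. Define $P_{n,k}:=\#\{m:K_{n,k}(m)>0\}$, the number of nonempty boxes. *)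

theory Defs
  imports "HOL-Analysis.Analysis" "HOL-Computational_Algebra.Formal_Power_Series"
begin

definition Phi_fps :: "(nat \<Rightarrow> real) \<Rightarrow> real fps" where
  "Phi_fps phi = Abs_fps (\<lambda>m. if m = 0 then 0 else phi m / fact m)"

definition bellB :: "(nat \<Rightarrow> real) \<Rightarrow> nat \<Rightarrow> nat \<Rightarrow> real" where
  "bellB phi k l = fact k / fact l * fps_nth (Phi_fps phi ^ l) k"

definition sigma :: "(nat \<Rightarrow> real) \<Rightarrow> nat \<Rightarrow> real \<Rightarrow> real" where
  "sigma phi k \<theta> = (if k = 0 then 1 else (\<Sum>l=1..k. bellB phi k l * \<theta> ^ l))"

text \<open>Configurations (k_1,...,k_n), boxes indexed by 0..n-1, with total k.\<close>
definition configs :: "nat \<Rightarrow> nat \<Rightarrow> (nat \<Rightarrow> nat) set" where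
  "configs n k = {ks. (\<forall>i. n \<le> i \<longrightarrow> ks i = 0) \<and> (\<Sum>i<n. ks i) = k}"

definition probK :: "(nat \<Rightarrow> real) \<Rightarrow> real \<Rightarrow> nat \<Rightarrow> nat \<Rightarrow> (nat \<Rightarrow> nat) \<Rightarrow> real" where
  "probK phi \<theta> n k ks =
     fact k / sigma phi k (real n * \<theta>) * (\<Prod>m<n. sigma phi (ks m) \<theta> / fact (ks m))"

definition nonempty :: "nat \<Rightarrow> (nat \<Rightarrow> nat) \<Rightarrow> nat" where
  "nonempty n ks = card {m. m < n \<and> 0 < ks m}"

definition probP :: "(nat \<Rightarrow> real) \<Rightarrow> real \<Rightarrow> nat \<Rightarrow> nat \<Rightarrow> nat \<Rightarrow> real" where
  "probP phi \<theta> n k p = (\<Sum>ks\<in>{ks\<in>configs n k. nonempty n ks = p}. probK phi \<theta> n k ks)"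

definition pgfP :: "(nat \<Rightarrow> real) \<Rightarrow> real \<Rightarrow> nat \<Rightarrow> nat \<Rightarrow> complex \<Rightarrow> complex" where
  "pgfP phi \<theta> n k u = (\<Sum>ks\<in>configs n k. complex_of_real (probK phi \<theta> n k ks) * u ^ nonempty n ks)"

definition meanP :: "(nat \<Rightarrow> real) \<Rightarrow> real \<Rightarrow> nat \<Rightarrow> nat \<Rightarrow> real" where
  "meanP phi \<theta> n k = (\<Sum>ks\<in>configs n k. probK phi \<theta> n k ks * real (nonempty n ks))"

definition varP :: "(nat \<Rightarrow> real) \<Rightarrow> real \<Rightarrow> nat \<Rightarrow> nat \<Rightarrow> real" where
  "varP phi \<theta> n k =
     (\<Sum>ks\<in>configs n k. probK phi \<theta> n k ks * real (nonempty n ks) ^ 2) - (meanP phi \<theta> n k) ^ 2"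

end

theory Submission
  imports Defs
begin

unbundle no vec_syntax
unbundle fps_syntax

text \<open>
  Write \<open>Z\<close> for the number of empty boxes, so that \<open>P = n - Z\<close>. By the product form of the law,
  the configurations leaving a given set \<open>S\<close> of boxes empty carry total mass \<open>k!/\<sigma>_k(n\<theta>)\<close>
  times the \<open>k\<close>-th coefficient of \<open>(e^{\<theta>\<phi>})^{n-|S|} = e^{(n-|S|)\<theta>\<phi>}\<close>, that is
  \<open>\<sigma>_k((n-|S|)\<theta>) / \<sigma>_k(n\<theta>)\<close>. Summing over the sets \<open>S\<close> of size \<open>j\<close> gives the binomial moments
  \<open>E (Z choose j) = (n choose j) \<sigma>_k((n-j)\<theta>) / \<sigma>_k(n\<theta>)\<close>. Every quantity in the theorem is the
  expectation of a polynomial of degree at most \<open>n\<close> in \<open>Z\<close>: \<open>u^(n-Z)\<close> by the binomial theorem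
  for \<open>((1-u) + u)^Z\<close>, the indicator of \<open>Z = n - p\<close> by binomial inversion, and \<open>P\<close>, \<open>P^2\<close>
  directly. Expanded in the basis \<open>Z choose j\<close>, each becomes a combination of binomial moments.
  The support of \<open>P\<close> is \<open>{1..k}\<close> because \<open>1 \<le> P \<le> k\<close> and all weights are positive.

  Everything happens at the level of formal power series and finite sums.
\<close>

lemma Phi_fps_nth_0 [simp]: "Phi_fps phi $ 0 = 0"
  by (simp add: Phi_fps_def)

lemma sigma_0 [simp]: "sigma phi 0 t = 1"
  by (simp add: sigma_def)

lemma sigma_at_0: "0 < k \<Longrightarrow> sigma phi k 0 = 0"
  by (simp add: sigma_def)

definition sigma_egf :: "(nat \<Rightarrow> real) \<Rightarrow> real \<Rightarrow> real fps" where
  "sigma_egf phi t = Abs_fps (\<lambda>j. sigma phi j t / fact j)"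

lemma sigma_egf_nth [simp]: "sigma_egf phi t $ j = sigma phi j t / fact j"
  by (simp add: sigma_egf_def)

lemma sigma_egf_eq_exp_compose: "sigma_egf phi t = fps_exp t oo Phi_fps phi"
proof (rule fps_ext)
  fix j
  show "sigma_egf phi t $ j = (fps_exp t oo Phi_fps phi) $ j"
  proof (cases "j = 0")
    case False
    have "(fps_exp t oo Phi_fps phi) $ j = (\<Sum>i=0..j. t ^ i / fact i * (Phi_fps phi ^ i $ j))"
      by (simp add: fps_compose_nth)
    also have "\<dots> = (\<Sum>i=1..j. t ^ i / fact i * (Phi_fps phi ^ i $ j))"
      using False by (simp add: sum.atLeast_Suc_atMost)
    also have "\<dots> = (\<Sum>l=1..j. bellB phi j l * t ^ l) / fact j"
      by (simp add: sum_divide_distrib bellB_def mult_ac)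
    finally show ?thesis
      using False by (simp add: sigma_def)
  qed simp
qed

lemma sigma_egf_power: "sigma_egf phi t ^ N = sigma_egf phi (real N * t)"
  by (simp add: sigma_egf_eq_exp_compose fps_compose_power fps_exp_power_mult)

lemma Phi_fps_power_nth_nonneg:
  assumes "\<And>m. 1 \<le> m \<Longrightarrow> 0 \<le> phi m"
  shows "0 \<le> (Phi_fps phi ^ i) $ j"
proof (induction i arbitrary: j)
  case (Suc i)
  have "0 \<le> Phi_fps phi $ a" for a
    using assms by (simp add: Phi_fps_def)
  with Suc show ?case
    by (simp add: fps_mult_nth sum_nonneg)
qed simp

lemma sigma_pos:
  assumes "\<And>m. 1 \<le> m \<Longrightarrow> 0 \<le> phi m" "0 < phi 1" "0 < t"
  shows "0 < sigma phi j t"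
proof -
  have "(fps_exp t oo Phi_fps phi) $ j = (\<Sum>i=0..j. t ^ i / fact i * (Phi_fps phi ^ i $ j))"
    by (simp add: fps_compose_nth)
  also have "\<dots> > 0"
  proof (rule sum_pos2[where i = j])
    show "0 < t ^ j / fact j * (Phi_fps phi ^ j $ j)"
      using assms by (simp add: startsby_zero_power_nth_same Phi_fps_def)
    show "0 \<le> t ^ i / fact i * (Phi_fps phi ^ i $ j)" for i
      using assms Phi_fps_power_nth_nonneg[of phi i j] by simp
  qed auto
  finally show ?thesis
    by (simp add: zero_less_divide_iff flip: sigma_egf_eq_exp_compose)
qed

definition weak_compositions :: "'a set \<Rightarrow> nat \<Rightarrow> ('a \<Rightarrow> nat) set" where
  "weak_compositions A k = {ks. (\<forall>i. i \<notin> A \<longrightarrow> ks i = 0) \<and> sum ks A = k}"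

lemma finite_weak_compositions:
  assumes "finite A"
  shows "finite (weak_compositions A k)"
proof -
  have "weak_compositions A k \<subseteq> {f. \<forall>x. (x \<in> A \<longrightarrow> f x \<in> {0..k}) \<and> (x \<notin> A \<longrightarrow> f x = 0)}"
    using assms by (auto simp: weak_compositions_def intro: member_le_sum)
  then show ?thesis
    by (rule finite_subset) (intro finite_set_of_finite_funs assms finite_atLeastAtMost)
qed

lemma weak_compositions_empty: "weak_compositions {} k = (if k = 0 then {\<lambda>_. 0} else {})"
  by (auto simp: weak_compositions_def)

lemma weak_compositions_vanishing:
  assumes "finite A"
  shows "{ks \<in> weak_compositions A k. \<forall>m\<in>S. ks m = 0} = weak_compositions (A - S) k"
proof -
  have "sum ks (A - S) = sum ks A" if "\<forall>m\<in>S. ks m = 0" for ks :: "'a \<Rightarrow> nat"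
    using assms that by (intro sum.mono_neutral_left) auto
  then show ?thesis
    by (auto simp: weak_compositions_def)
qed

lemma sum_prod_weak_compositions:
  fixes F :: "'b::comm_semiring_1 fps"
  assumes "finite A"
  shows "(\<Sum>ks\<in>weak_compositions A k. \<Prod>m\<in>A. F $ ks m) = (F ^ card A) $ k"
  using assms
proof (induction A arbitrary: k rule: finite_induct)
  case empty
  then show ?case
    by (simp add: weak_compositions_empty)
next
  case (insert a A k)
  have "(\<Sum>ks\<in>weak_compositions (insert a A) k. \<Prod>m\<in>insert a A. F $ ks m)
      = (\<Sum>(j, ks)\<in>(SIGMA j:{0..k}. weak_compositions A (k - j)). F $ j * (\<Prod>m\<in>A. F $ ks m))"
  proof (rule sum.reindex_bij_witness[where j = "\<lambda>ks. (ks a, ks(a := 0))" and i = "\<lambda>(j, ks). ks(a := j)"])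
    fix ks
    assume ks: "ks \<in> weak_compositions (insert a A) k"
    have "sum (ks(a := 0)) A = sum ks A" "(\<Prod>m\<in>A. F $ (ks(a := 0)) m) = (\<Prod>m\<in>A. F $ ks m)"
      using insert by (auto intro!: sum.cong prod.cong)
    with ks insert show "(ks a, ks(a := 0)) \<in> (SIGMA j:{0..k}. weak_compositions A (k - j))"
      and "(case (ks a, ks(a := 0)) of (j, ks) \<Rightarrow> F $ j * (\<Prod>m\<in>A. F $ ks m)) = (\<Prod>m\<in>insert a A. F $ ks m)"
      by (auto simp: weak_compositions_def)
  next
    fix b
    assume "b \<in> (SIGMA j:{0..k}. weak_compositions A (k - j))"
    then obtain j ks where b: "b = (j, ks)" "j \<le> k" "ks \<in> weak_compositions A (k - j)"
      by auto
    moreover have "sum (ks(a := j)) A = sum ks A"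
      using insert by (intro sum.cong) auto
    ultimately show "(case b of (j, ks) \<Rightarrow> ks(a := j)) \<in> weak_compositions (insert a A) k"
      and "((case b of (j, ks) \<Rightarrow> ks(a := j)) a, (case b of (j, ks) \<Rightarrow> ks(a := j))(a := 0)) = b"
      using insert by (auto simp: weak_compositions_def)
  qed auto
  also have "\<dots> = (\<Sum>j=0..k. F $ j * (\<Sum>ks\<in>weak_compositions A (k - j). \<Prod>m\<in>A. F $ ks m))"
    by (subst sum.Sigma[symmetric]) (auto simp: finite_weak_compositions insert.hyps sum_distrib_left)
  also have "\<dots> = (F ^ card (insert a A)) $ k"
    using insert by (simp add: fps_mult_nth)
  finally show ?case .
qed

lemma configs_eq_weak_compositions: "configs n k = weak_compositions {..<n} k"
  by (auto simp: configs_def weak_compositions_def)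

lemma finite_configs: "finite (configs n k)"
  by (simp add: configs_eq_weak_compositions finite_weak_compositions)

definition sigma_ratio :: "(nat \<Rightarrow> real) \<Rightarrow> real \<Rightarrow> nat \<Rightarrow> nat \<Rightarrow> nat \<Rightarrow> real" where
  "sigma_ratio phi \<theta> n k q = sigma phi k (real q * \<theta>) / sigma phi k (real n * \<theta>)"

lemma sigma_ratio_0: "0 < k \<Longrightarrow> sigma_ratio phi \<theta> n k 0 = 0"
  by (simp add: sigma_ratio_def sigma_at_0)

lemma sigma_ratio_self:
  assumes "\<And>m. 1 \<le> m \<Longrightarrow> 0 \<le> phi m" "0 < phi 1" "0 < \<theta>" "0 < n"
  shows "sigma_ratio phi \<theta> n k n = 1"
  using sigma_pos[of phi "real n * \<theta>" k] assms by (simp add: sigma_ratio_def)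

lemma probK_eq_prod_sigma_egf:
  "probK phi \<theta> n k ks = fact k / sigma phi k (real n * \<theta>) * (\<Prod>m<n. sigma_egf phi \<theta> $ ks m)"
  by (simp add: probK_def)

lemma probK_pos:
  assumes "\<And>m. 1 \<le> m \<Longrightarrow> 0 \<le> phi m" "0 < phi 1" "0 < \<theta>" "0 < n"
  shows "0 < probK phi \<theta> n k ks"
proof -
  have "0 < sigma phi k (real n * \<theta>)" "\<And>j. 0 < sigma phi j \<theta>"
    using assms by (auto intro: sigma_pos)
  then show ?thesis
    unfolding probK_def by (intro mult_pos_pos divide_pos_pos prod_pos) auto
qed

lemma prob_boxes_empty:
  assumes "S \<subseteq> {..<n}"
  shows "(\<Sum>ks\<in>{ks\<in>configs n k. \<forall>m\<in>S. ks m = 0}. probK phi \<theta> n k ks) = sigma_ratio phi \<theta> n k (n - card S)"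
proof -
  let ?A = "{..<n} - S"
  have prod_eq: "(\<Prod>m<n. sigma_egf phi \<theta> $ ks m) = (\<Prod>m\<in>?A. sigma_egf phi \<theta> $ ks m)"
    if "ks \<in> weak_compositions ?A k" for ks
    using that by (intro prod.mono_neutral_right) (auto simp: weak_compositions_def)
  have "(\<Sum>ks\<in>{ks\<in>configs n k. \<forall>m\<in>S. ks m = 0}. probK phi \<theta> n k ks)
      = fact k / sigma phi k (real n * \<theta>) * (\<Sum>ks\<in>weak_compositions ?A k. \<Prod>m\<in>?A. sigma_egf phi \<theta> $ ks m)"
    unfolding configs_eq_weak_compositions weak_compositions_vanishing[OF finite_lessThan]
      probK_eq_prod_sigma_egf sum_distrib_left
    using prod_eq by (intro sum.cong) auto
  also have "\<dots> = fact k / sigma phi k (real n * \<theta>) * (sigma_egf phi \<theta> ^ (n - card S)) $ k"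
    using sum_prod_weak_compositions[of ?A "sigma_egf phi \<theta>" k] assms
    by (simp add: card_Diff_subset finite_subset del: sigma_egf_nth)
  also have "\<dots> = sigma_ratio phi \<theta> n k (n - card S)"
    by (simp add: sigma_egf_power sigma_ratio_def)
  finally show ?thesis .
qed

definition empty_boxes :: "nat \<Rightarrow> (nat \<Rightarrow> nat) \<Rightarrow> nat set" where
  "empty_boxes n ks = {m. m < n \<and> ks m = 0}"

lemma card_empty_boxes_le: "card (empty_boxes n ks) \<le> n"
  using card_mono[of "{..<n}" "empty_boxes n ks"] by (auto simp: empty_boxes_def)

lemma nonempty_eq_diff_empty_boxes: "nonempty n ks = n - card (empty_boxes n ks)"
proof -
  have "{m. m < n \<and> 0 < ks m} = {..<n} - empty_boxes n ks"
    by (auto simp: empty_boxes_def)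
  then show ?thesis
    by (simp add: nonempty_def card_Diff_subset empty_boxes_def subset_eq)
qed

lemma binomial_moment_empty_boxes:
  "(\<Sum>ks\<in>configs n k. probK phi \<theta> n k ks * real (card (empty_boxes n ks) choose j))
     = real (n choose j) * sigma_ratio phi \<theta> n k (n - j)"
proof -
  let ?Sj = "{S. S \<subseteq> {..<n} \<and> card S = j}"
  have count: "real (card (empty_boxes n ks) choose j) = (\<Sum>S\<in>?Sj. if S \<subseteq> empty_boxes n ks then 1 else 0)"
    for ks
  proof -
    have "{S. S \<subseteq> empty_boxes n ks \<and> card S = j} = ?Sj \<inter> {S. S \<subseteq> empty_boxes n ks}"
      by (auto simp: empty_boxes_def)
    moreover have "finite (empty_boxes n ks)"
      by (simp add: empty_boxes_def)
    ultimately show ?thesis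
      using n_subsets[of "empty_boxes n ks" j] by (simp add: sum.If_cases)
  qed
  have empty_iff: "S \<subseteq> empty_boxes n ks \<longleftrightarrow> (\<forall>m\<in>S. ks m = 0)" if "S \<in> ?Sj" for S ks
    using that by (auto simp: empty_boxes_def)
  have "(\<Sum>ks\<in>configs n k. probK phi \<theta> n k ks * real (card (empty_boxes n ks) choose j))
      = (\<Sum>ks\<in>configs n k. \<Sum>S\<in>?Sj. if S \<subseteq> empty_boxes n ks then probK phi \<theta> n k ks else 0)"
    unfolding count sum_distrib_left by (intro sum.cong refl) simp
  also have "\<dots> = (\<Sum>S\<in>?Sj. \<Sum>ks\<in>configs n k. if \<forall>m\<in>S. ks m = 0 then probK phi \<theta> n k ks else 0)"
    by (subst sum.swap) (intro sum.cong refl; simp add: empty_iff)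
  also have "\<dots> = (\<Sum>S\<in>?Sj. sigma_ratio phi \<theta> n k (n - j))"
    by (intro sum.cong refl) (simp add: sum.inter_filter[symmetric] finite_configs prob_boxes_empty)
  also have "\<dots> = real (n choose j) * sigma_ratio phi \<theta> n k (n - j)"
    using n_subsets[of "{..<n}" j] by simp
  finally show ?thesis .
qed

lemma expectation_binomial_expansion:
  fixes g :: "nat \<Rightarrow> 'a::real_algebra_1"
  shows "(\<Sum>ks\<in>configs n k. of_real (probK phi \<theta> n k ks) *
            (\<Sum>j\<le>n. of_nat (card (empty_boxes n ks) choose j) * g j))
       = (\<Sum>j\<le>n. of_real (real (n choose j) * sigma_ratio phi \<theta> n k (n - j)) * g j)"
proof -
  let ?z = "\<lambda>ks. card (empty_boxes n ks)"
  have moment: "(\<Sum>ks\<in>configs n k. of_real (probK phi \<theta> n k ks) * of_nat (?z ks choose j))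
      = (of_real (real (n choose j) * sigma_ratio phi \<theta> n k (n - j)) :: 'a)" for j
    unfolding binomial_moment_empty_boxes[symmetric] by (simp add: of_real_sum)
  have "(\<Sum>ks\<in>configs n k. of_real (probK phi \<theta> n k ks) * (\<Sum>j\<le>n. of_nat (?z ks choose j) * g j))
      = (\<Sum>j\<le>n. \<Sum>ks\<in>configs n k. of_real (probK phi \<theta> n k ks) * (of_nat (?z ks choose j) * g j))"
    unfolding sum_distrib_left by (rule sum.swap)
  also have "\<dots> = (\<Sum>j\<le>n. of_real (real (n choose j) * sigma_ratio phi \<theta> n k (n - j)) * g j)"
    by (intro sum.cong refl) (simp only: mult.assoc[symmetric] sum_distrib_right[symmetric] moment)
  finally show ?thesis .
qed

lemma sum_probK_eq_1:
  assumes "\<And>m. 1 \<le> m \<Longrightarrow> 0 \<le> phi m" "0 < phi 1" "0 < \<theta>" "0 < n"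
  shows "(\<Sum>ks\<in>configs n k. probK phi \<theta> n k ks) = 1"
  using binomial_moment_empty_boxes[where j = 0] sigma_ratio_self[of phi \<theta> n k, OF assms] by simp

lemma power_diff_eq_binomial_sum:
  fixes u :: "'a::comm_ring_1"
  assumes "z \<le> n"
  shows "u ^ (n - z) = (\<Sum>j\<le>n. of_nat (z choose j) * (u ^ (n - j) * (1 - u) ^ j))"
proof -
  have "u ^ (n - z) = (\<Sum>j\<le>z. of_nat (z choose j) * (1 - u) ^ j * u ^ (z - j) * u ^ (n - z))"
    using binomial_ring[of "1 - u" u z] by (simp flip: sum_distrib_right)
  also have "\<dots> = (\<Sum>j\<le>z. of_nat (z choose j) * (u ^ (n - j) * (1 - u) ^ j))"
  proof (intro sum.cong refl)
    fix j
    assume "j \<in> {..z}"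
    with assms have "u ^ (n - j) = u ^ (z - j) * u ^ (n - z)"
      by (simp flip: power_add)
    then show "of_nat (z choose j) * (1 - u) ^ j * u ^ (z - j) * u ^ (n - z) = of_nat (z choose j) * (u ^ (n - j) * (1 - u) ^ j)"
      by (simp add: mult_ac)
  qed
  also have "\<dots> = (\<Sum>j\<le>n. of_nat (z choose j) * (u ^ (n - j) * (1 - u) ^ j))"
    using assms by (intro sum.mono_neutral_left) (auto simp: binomial_eq_0)
  finally show ?thesis .
qed

lemma binomial_inversion_indicator:
  assumes "z \<le> n"
  shows "(\<Sum>j\<le>n. real (z choose j) * ((-1) ^ (j - m) * real (j choose m))) = (if z = m then 1 else 0)"
proof (cases "m \<le> z")
  case True
  have "(\<Sum>j\<le>n. real (z choose j) * ((-1) ^ (j - m) * real (j choose m)))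
      = (\<Sum>j=m..z. real (z choose j) * ((-1) ^ (j - m) * real (j choose m)))"
    using assms by (intro sum.mono_neutral_right) (auto simp: binomial_eq_0)
  also have "\<dots> = (\<Sum>j=m..z. real (z choose m) * ((-1) ^ (j - m) * real ((z - m) choose (j - m))))"
  proof (intro sum.cong refl)
    fix j assume "j \<in> {m..z}"
    then have "real (z choose j) * real (j choose m) = real (z choose m) * real ((z - m) choose (j - m))"
      by (simp flip: of_nat_mult add: choose_mult)
    then show "real (z choose j) * ((-1) ^ (j - m) * real (j choose m)) = real (z choose m) * ((-1) ^ (j - m) * real ((z - m) choose (j - m)))"
      by (simp add: mult_ac)
  qed
  also have "\<dots> = (\<Sum>i\<le>z - m. real (z choose m) * ((-1) ^ i * real ((z - m) choose i)))"
    using True by (intro sum.reindex_bij_witness[where i = "\<lambda>i. i + m" and j = "\<lambda>j. j - m"]) auto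
  also have "\<dots> = real (z choose m) * (\<Sum>i\<le>z - m. (-1) ^ i * real ((z - m) choose i))"
    by (simp add: sum_distrib_left)
  also have "\<dots> = (if z = m then 1 else 0)"
    using True choose_alternating_sum[of "z - m", where 'a = real] by auto
  finally show ?thesis .
qed (auto simp: binomial_eq_0 intro!: sum.neutral)

lemma two_mult_choose_two: "2 * real (z choose 2) = real z * (real z - 1)"
proof (induction z)
  case (Suc z)
  have "Suc z choose 2 = z + (z choose 2)"
    by (simp add: numeral_2_eq_2)
  with Suc show ?case
    by (simp add: algebra_simps)
qed simp

lemma choose_diff_mult_choose_diff:
  assumes "q \<le> p" "p \<le> n"
  shows "(n choose (n - q)) * ((n - q) choose (n - p)) = (n choose p) * (p choose q)"
proof -
  have "(n choose (n - q)) * ((n - q) choose (n - p)) = (n choose (n - p)) * (p choose (p - q))"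
    using assms choose_mult[of "n - p" "n - q" n] by (simp add: diff_diff_right)
  with assms show ?thesis
    by (simp add: binomial_symmetric[symmetric])
qed

lemma pgfP_eq:
  assumes "0 < k"
  shows "pgfP phi \<theta> n k u =
           (\<Sum>p<n. of_nat (n choose p) * u ^ (n - p) * (1 - u) ^ p *
              complex_of_real (sigma phi k (real (n - p) * \<theta>) / sigma phi k (real n * \<theta>)))"
proof -
  have "pgfP phi \<theta> n k u = (\<Sum>ks\<in>configs n k. of_real (probK phi \<theta> n k ks) *
          (\<Sum>j\<le>n. of_nat (card (empty_boxes n ks) choose j) * (u ^ (n - j) * (1 - u) ^ j)))"
    unfolding pgfP_def nonempty_eq_diff_empty_boxes
    by (intro sum.cong refl) (simp flip: power_diff_eq_binomial_sum[OF card_empty_boxes_le])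
  also have "\<dots> = (\<Sum>j\<le>n. of_real (real (n choose j) * sigma_ratio phi \<theta> n k (n - j)) * (u ^ (n - j) * (1 - u) ^ j))"
    by (rule expectation_binomial_expansion)
  also have "\<dots> = (\<Sum>j<n. of_real (real (n choose j) * sigma_ratio phi \<theta> n k (n - j)) * (u ^ (n - j) * (1 - u) ^ j))"
    using assms by (simp add: lessThan_Suc_atMost[symmetric] sigma_ratio_0)
  finally show ?thesis
    by (simp add: sigma_ratio_def mult_ac)
qed

lemma probP_eq:
  assumes "0 < k" "1 \<le> p" "p \<le> n"
  shows "probP phi \<theta> n k p =
           real (n choose p) * (\<Sum>q=1..p. (-1) ^ (p - q) * real (p choose q) *
             (sigma phi k (real q * \<theta>) / sigma phi k (real n * \<theta>)))"
proof -
  let ?g = "\<lambda>j. (-1::real) ^ (j - (n - p)) * real (j choose (n - p))"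
  have "nonempty n ks = p \<longleftrightarrow> card (empty_boxes n ks) = n - p" for ks
    using card_empty_boxes_le[of n ks] assms by (auto simp: nonempty_eq_diff_empty_boxes)
  then have "probP phi \<theta> n k p
      = (\<Sum>ks\<in>configs n k. probK phi \<theta> n k ks * (\<Sum>j\<le>n. real (card (empty_boxes n ks) choose j) * ?g j))"
    unfolding probP_def
    by (auto simp: sum.inter_filter finite_configs binomial_inversion_indicator card_empty_boxes_le
        intro!: sum.cong)
  also have "\<dots> = (\<Sum>j\<le>n. real (n choose j) * sigma_ratio phi \<theta> n k (n - j) * ?g j)"
    using expectation_binomial_expansion[where 'a = real] by simp
  also have "\<dots> = (\<Sum>q\<le>n. real (n choose (n - q)) * sigma_ratio phi \<theta> n k q * ?g (n - q))"
    by (intro sum.reindex_bij_witness[where i = "\<lambda>q. n - q" and j = "\<lambda>j. n - j"]) auto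
  also have "\<dots> = (\<Sum>q=1..p. real (n choose (n - q)) * sigma_ratio phi \<theta> n k q * ?g (n - q))"
  proof (intro sum.mono_neutral_right ballI)
    fix q
    assume q: "q \<in> {..n} - {1..p}"
    show "real (n choose (n - q)) * sigma_ratio phi \<theta> n k q * ?g (n - q) = 0"
    proof (cases "q = 0")
      case False
      with q assms have "n - q < n - p"
        by auto
      then show ?thesis
        by (simp add: binomial_eq_0)
    qed (simp add: sigma_ratio_0 assms)
  qed (use assms in auto)
  also have "\<dots> = (\<Sum>q=1..p. real (n choose p) * ((-1) ^ (p - q) * real (p choose q) * sigma_ratio phi \<theta> n k q))"
  proof (intro sum.cong refl)
    fix q
    assume "q \<in> {1..p}"
    with assms have q: "q \<le> p" "n - q - (n - p) = p - q"
      by auto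
    have coeff: "real (n choose (n - q)) * real (n - q choose (n - p)) = real (n choose p) * real (p choose q)"
      using q assms by (simp only: of_nat_mult[symmetric] choose_diff_mult_choose_diff)
    have "real (n choose (n - q)) * sigma_ratio phi \<theta> n k q * ?g (n - q)
        = (-1) ^ (p - q) * (real (n choose (n - q)) * real (n - q choose (n - p))) * sigma_ratio phi \<theta> n k q"
      by (simp only: q mult_ac)
    then show "real (n choose (n - q)) * sigma_ratio phi \<theta> n k q * ?g (n - q)
        = real (n choose p) * ((-1) ^ (p - q) * real (p choose q) * sigma_ratio phi \<theta> n k q)"
      unfolding coeff by (simp only: mult_ac)
  qed
  finally show ?thesis
    by (simp add: sum_distrib_left sigma_ratio_def)
qed

lemma expectation_card_empty_boxes:
  "(\<Sum>ks\<in>configs n k. probK phi \<theta> n k ks * real (card (empty_boxes n ks)))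
     = real n * sigma_ratio phi \<theta> n k (n - 1)"
  using binomial_moment_empty_boxes[where j = 1] by simp

lemma meanP_eq:
  assumes "\<And>m. 1 \<le> m \<Longrightarrow> 0 \<le> phi m" "0 < phi 1" "0 < \<theta>" "0 < n"
  shows "meanP phi \<theta> n k = real n * (1 - sigma_ratio phi \<theta> n k (n - 1))"
proof -
  have "real (nonempty n ks) = real n - real (card (empty_boxes n ks))" for ks
    using card_empty_boxes_le[of n ks] by (simp add: nonempty_eq_diff_empty_boxes of_nat_diff)
  then have "meanP phi \<theta> n k = real n * (\<Sum>ks\<in>configs n k. probK phi \<theta> n k ks)
      - (\<Sum>ks\<in>configs n k. probK phi \<theta> n k ks * real (card (empty_boxes n ks)))"
    by (simp add: meanP_def right_diff_distrib sum_subtractf sum_distrib_left mult_ac)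
  then show ?thesis
    by (simp add: sum_probK_eq_1[of phi \<theta> n k, OF assms] expectation_card_empty_boxes right_diff_distrib)
qed

lemma second_moment_eq:
  assumes "\<And>m. 1 \<le> m \<Longrightarrow> 0 \<le> phi m" "0 < phi 1" "0 < \<theta>" "0 < n"
  shows "(\<Sum>ks\<in>configs n k. probK phi \<theta> n k ks * real (nonempty n ks) ^ 2)
       = real n ^ 2 + (1 - 2 * real n) * real n * sigma_ratio phi \<theta> n k (n - 1)
         + real n * (real n - 1) * sigma_ratio phi \<theta> n k (n - 2)"
proof -
  let ?z = "\<lambda>ks. card (empty_boxes n ks)"
  have "real (nonempty n ks) ^ 2 = real n ^ 2 + (1 - 2 * real n) * real (?z ks) + 2 * real (?z ks choose 2)"
    for ks
    using card_empty_boxes_le[of n ks] two_mult_choose_two[of "?z ks"]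
    by (simp add: nonempty_eq_diff_empty_boxes of_nat_diff power2_eq_square algebra_simps)
  then have "(\<Sum>ks\<in>configs n k. probK phi \<theta> n k ks * real (nonempty n ks) ^ 2)
      = real n ^ 2 * (\<Sum>ks\<in>configs n k. probK phi \<theta> n k ks)
        + (1 - 2 * real n) * (\<Sum>ks\<in>configs n k. probK phi \<theta> n k ks * real (?z ks))
        + 2 * (\<Sum>ks\<in>configs n k. probK phi \<theta> n k ks * real (?z ks choose 2))"
    by (simp add: sum.distrib sum_distrib_left distrib_left mult_ac)
  also have "\<dots> = real n ^ 2 + (1 - 2 * real n) * (real n * sigma_ratio phi \<theta> n k (n - 1))
      + 2 * real (n choose 2) * sigma_ratio phi \<theta> n k (n - 2)"
    by (simp add: sum_probK_eq_1[of phi \<theta> n k, OF assms] expectation_card_empty_boxes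
        binomial_moment_empty_boxes)
  finally show ?thesis
    using two_mult_choose_two[of n] by (simp add: algebra_simps)
qed

lemma varP_eq:
  assumes "\<And>m. 1 \<le> m \<Longrightarrow> 0 \<le> phi m" "0 < phi 1" "0 < \<theta>" "0 < n"
  shows "varP phi \<theta> n k = real n * (sigma_ratio phi \<theta> n k (n - 1)
           + (real n - 1) * sigma_ratio phi \<theta> n k (n - 2) - real n * sigma_ratio phi \<theta> n k (n - 1) ^ 2)"
  using second_moment_eq[of phi \<theta> n k, OF assms] meanP_eq[of phi \<theta> n k, OF assms]
  by (simp add: varP_def) (simp add: power2_eq_square algebra_simps)

lemma nonempty_bounds:
  assumes "ks \<in> configs n k" "0 < k"
  shows "1 \<le> nonempty n ks" "nonempty n ks \<le> k"
proof -
  let ?N = "{m. m < n \<and> 0 < ks m}"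
  have "k = sum ks {..<n}"
    using assms by (simp add: configs_def)
  also have "\<dots> = sum ks ?N"
    by (intro sum.mono_neutral_right) auto
  finally have k_eq: "k = sum ks ?N" .
  then show "nonempty n ks \<le> k"
    using sum_mono[of ?N "\<lambda>_. 1::nat" ks] by (simp add: nonempty_def)
  show "1 \<le> nonempty n ks"
    using k_eq assms(2) by (auto simp: nonempty_def Suc_le_eq card_gt_0_iff intro: ccontr)
qed

lemma config_with_nonempty:
  assumes "1 \<le> p" "p \<le> k" "p \<le> n"
  obtains ks where "ks \<in> configs n k" "nonempty n ks = p"
proof
  let ?ks = "\<lambda>m. if m = 0 then k - (p - 1) else if m < p then 1 else 0"
  obtain p' where p': "p = Suc p'"
    using assms by (cases p) auto
  have "sum ?ks {..<n} = sum ?ks {..<Suc p'}"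
    using assms p' by (intro sum.mono_neutral_right) auto
  also have "\<dots> = k"
    using assms p' by (subst sum.lessThan_Suc_shift) simp
  finally show "?ks \<in> configs n k"
    using assms by (auto simp: configs_def)
  have "{m. m < n \<and> 0 < ?ks m} = {..<p}"
    using assms by auto
  then show "nonempty n ?ks = p"
    by (simp add: nonempty_def)
qed

lemma probP_support:
  assumes "\<And>m. 1 \<le> m \<Longrightarrow> 0 \<le> phi m" "0 < phi 1" "0 < \<theta>" "0 < k" "k < n"
  shows "{p. probP phi \<theta> n k p \<noteq> 0} = {1..k}"
proof (intro set_eqI iffI)
  fix p
  assume "p \<in> {p. probP phi \<theta> n k p \<noteq> 0}"
  then have "{ks\<in>configs n k. nonempty n ks = p} \<noteq> {}"
    by (auto simp only: probP_def mem_Collect_eq sum.empty)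
  then show "p \<in> {1..k}"
    using nonempty_bounds[OF _ assms(4)] by fastforce
next
  fix p
  assume "p \<in> {1..k}"
  with assms obtain ks0 where ks0: "ks0 \<in> configs n k" "nonempty n ks0 = p"
    using config_with_nonempty[of p k n] by auto
  have "0 < probP phi \<theta> n k p"
    unfolding probP_def
    using ks0 probK_pos[of phi \<theta> n k, OF assms(1-3)] assms(5)
    by (intro sum_pos2[where i = ks0]) (auto simp: finite_configs less_imp_le)
  then show "p \<in> {p. probP phi \<theta> n k p \<noteq> 0}"
    by simp
qed

theorem proposition1:
  fixes phi :: "nat \<Rightarrow> real" and \<theta> :: real and n k :: nat
  assumes phi_nonneg: "\<And>m. 1 \<le> m \<Longrightarrow> 0 \<le> phi m"
    and phi1: "0 < phi 1"
    and radius: "\<exists>x>0. summable (\<lambda>m. phi m * x ^ m / fact m)"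
    and theta: "0 < \<theta>" and n1: "1 \<le> n" and k1: "1 \<le> k"
  shows
    "(\<forall>u::complex. norm u \<le> 1 \<longrightarrow>
        pgfP phi \<theta> n k u =
          (\<Sum>p<n. of_nat (n choose p) * u ^ (n - p) * (1 - u) ^ p *
             complex_of_real (sigma phi k (real (n - p) * \<theta>) / sigma phi k (real n * \<theta>))))
     \<and> (n \<le> k \<longrightarrow>
        (\<forall>p\<in>{1..n}. probP phi \<theta> n k p =
           real (n choose p) * (\<Sum>q=1..p. (-1) ^ (p - q) * real (p choose q) *
             (sigma phi k (real q * \<theta>) / sigma phi k (real n * \<theta>))))
        \<and> meanP phi \<theta> n k =
            real n * (1 - sigma phi k (real (n - 1) * \<theta>) / sigma phi k (real n * \<theta>))
        \<and> varP phi \<theta> n k =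
            real n * (sigma phi k (real (n - 1) * \<theta>) / sigma phi k (real n * \<theta>)
              + (real n - 1) * (sigma phi k (real (n - 2) * \<theta>) / sigma phi k (real n * \<theta>))
              - real n * (sigma phi k (real (n - 1) * \<theta>) / sigma phi k (real n * \<theta>)) ^ 2))
     \<and> (k < n \<longrightarrow>
        (\<forall>p\<in>{1..k}. probP phi \<theta> n k p =
           real (n choose p) * (\<Sum>q=1..p. (-1) ^ (p - q) * real (p choose q) *
             (sigma phi k (real q * \<theta>) / sigma phi k (real n * \<theta>))))
        \<and> {p. probP phi \<theta> n k p \<noteq> 0} = {1..k})"
proof -
  have pos: "\<And>m. 1 \<le> m \<Longrightarrow> 0 \<le> phi m" "0 < phi 1" "0 < \<theta>" "0 < n"
    using phi_nonneg phi1 theta n1 by auto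
  have "0 < k"
    using k1 by simp
  then show ?thesis
    using pgfP_eq probP_eq meanP_eq[of phi \<theta> n k, OF pos] varP_eq[of phi \<theta> n k, OF pos]
      probP_support[of phi \<theta> k n, OF pos(1-3)]
    by (auto simp: sigma_ratio_def)
qed

end
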